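(* Fix a constant $p>2$ and a bounded open subset $\Omega\subset\mathbb{R}^2$ with area $|\Omega|$. Then for every integer $k\ge1$ there is a constant $c=c(k,|\Omega|)$ such that $$\|\partial_tu\cdot v\|_{\mathcal{W}^{k,p}}\le c\big(\|\partial_tu\|_{\mathcal{W}^{k,p}}\|v\|_\infty+\|u\|_{\mathcal{C}^k}\|v\|_{\mathcal{W}^{k,p}}\big)$$ for all functions $u,v\in C^\infty(\overline\Omega)$.
   Context: Coordinates on $\mathbb{R}^2$ are $(s,t)$. All norms are over $\Omega$: $\|w\|_{\mathcal{W}^{k,p}}=\big(\int_\Omega\sum_{2\nu+\mu\le2k}|\partial_s^\nu\partial_t^\mu w|^p\big)^{1/p}$ and the parabolic $\mathcal{C}^k$ norm is $\|w\|_{\mathcal{C}^k}=\sum_{2\nu+\mu\le2k}\|\partial_s^\nu\partial_t^\mu w\|_\infty$. *)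

theory Defs
  imports "HOL-Analysis.Analysis"
begin

definition pd_s :: "(real \<times> real \<Rightarrow> real) \<Rightarrow> real \<times> real \<Rightarrow> real" where
  "pd_s f = (\<lambda>(s,t). deriv (\<lambda>x. f (x,t)) s)"

definition pd_t :: "(real \<times> real \<Rightarrow> real) \<Rightarrow> real \<times> real \<Rightarrow> real" where
  "pd_t f = (\<lambda>(s,t). deriv (\<lambda>y. f (s,y)) t)"

fun pd_list :: "bool list \<Rightarrow> (real \<times> real \<Rightarrow> real) \<Rightarrow> real \<times> real \<Rightarrow> real" where
  "pd_list [] f = f"
| "pd_list (b # bs) f = (if b then pd_s else pd_t) (pd_list bs f)"

definition pd :: "nat \<Rightarrow> nat \<Rightarrow> (real \<times> real \<Rightarrow> real) \<Rightarrow> real \<times> real \<Rightarrow> real" where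
  "pd \<nu> \<mu> w = (pd_s ^^ \<nu>) ((pd_t ^^ \<mu>) w)"

definition smooth_on :: "(real \<times> real) set \<Rightarrow> (real \<times> real \<Rightarrow> real) \<Rightarrow> bool" where
  "smooth_on U f \<longleftrightarrow> (\<forall>bs. pd_list bs f differentiable_on U)"

definition smooth_closure :: "(real \<times> real) set \<Rightarrow> (real \<times> real \<Rightarrow> real) \<Rightarrow> bool" where
  "smooth_closure \<Omega> f \<longleftrightarrow> (\<exists>U. open U \<and> closure \<Omega> \<subseteq> U \<and> smooth_on U f)"

definition W_norm :: "nat \<Rightarrow> real \<Rightarrow> (real \<times> real) set \<Rightarrow> (real \<times> real \<Rightarrow> real) \<Rightarrow> real" where
  "W_norm k p \<Omega> w =
     (LINT x:\<Omega>|lborel. (\<Sum>(\<nu>,\<mu>)\<in>{(\<nu>,\<mu>). 2*\<nu> + \<mu> \<le> 2*k}. \<bar>pd \<nu> \<mu> w x\<bar> powr p)) powr (1/p)"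

definition sup_norm :: "(real \<times> real) set \<Rightarrow> (real \<times> real \<Rightarrow> real) \<Rightarrow> real" where
  "sup_norm \<Omega> w = (SUP x\<in>\<Omega>. \<bar>w x\<bar>)"

definition C_norm :: "nat \<Rightarrow> (real \<times> real) set \<Rightarrow> (real \<times> real \<Rightarrow> real) \<Rightarrow> real" where
  "C_norm k \<Omega> w = (\<Sum>(\<nu>,\<mu>)\<in>{(\<nu>,\<mu>). 2*\<nu> + \<mu> \<le> 2*k}. sup_norm \<Omega> (pd \<nu> \<mu> w))"

end

theory Submission
  imports Defs
begin

text \<open>By the Leibniz rule, \<open>\<partial>\<^sub>s^\<nu> \<partial>\<^sub>t^\<mu> (\<partial>\<^sub>t u \<cdot> v)\<close> is a sum of \<open>2^(\<nu>+\<mu>)\<close> products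
  \<open>\<partial>\<^sub>s^j \<partial>\<^sub>t^i (\<partial>\<^sub>t u) \<cdot> \<partial>\<^sub>s^(\<nu>-j) \<partial>\<^sub>t^(\<mu>-i) v\<close>. The term with \<open>(j, i) = (\<nu>, \<mu>)\<close> is
  bounded by \<open>|\<partial>\<^sub>s^\<nu> \<partial>\<^sub>t^\<mu> \<partial>\<^sub>t u| \<cdot> \<parallel>v\<parallel>\<^sub>\<infinity>\<close>. In every other term \<open>2j + i < 2k\<close>, so the
  factor \<open>\<partial>\<^sub>s^j \<partial>\<^sub>t^(i+1) u\<close> has parabolic order at most \<open>2k\<close> and is bounded by the
  \<open>C^k\<close> norm of \<open>u\<close>, while the other factor is one of the derivatives of \<open>v\<close> entering its
  \<open>W^(k,p)\<close> norm. Raising this pointwise bound to the power \<open>p\<close> and integrating gives the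
  estimate, with a constant depending only on \<open>k\<close> and \<open>p\<close>, not on \<open>\<Omega>\<close>.\<close>

abbreviation parabolic_orders :: "nat \<Rightarrow> (nat \<times> nat) set" where
  "parabolic_orders k \<equiv> {(\<nu>, \<mu>). 2*\<nu> + \<mu> \<le> 2*k}"

abbreviation W_integrand :: "nat \<Rightarrow> real \<Rightarrow> (real \<times> real \<Rightarrow> real) \<Rightarrow> real \<times> real \<Rightarrow> real" where
  "W_integrand k p w x \<equiv> \<Sum>(\<nu>, \<mu>)\<in>parabolic_orders k. \<bar>pd \<nu> \<mu> w x\<bar> powr p"

lemma finite_parabolic_orders: "finite (parabolic_orders k)"
  by (rule finite_subset[of _ "{..k} \<times> {..2*k}"]) auto

abbreviation pd_dir :: "bool \<Rightarrow> (real \<times> real \<Rightarrow> real) \<Rightarrow> real \<times> real \<Rightarrow> real" where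
  "pd_dir b \<equiv> if b then pd_s else pd_t"

definition coord :: "bool \<Rightarrow> real \<times> real \<Rightarrow> real" where
  "coord b x = (if b then fst x else snd x)"

definition coord_line :: "bool \<Rightarrow> real \<times> real \<Rightarrow> real \<Rightarrow> real \<times> real" where
  "coord_line b x a = (if b then (a, snd x) else (fst x, a))"

lemma coord_line_coord [simp]: "coord_line b x (coord b x) = x"
  by (simp add: coord_line_def coord_def)

lemma differentiable_coord_line: "coord_line b x differentiable (at a)"
  unfolding coord_line_def by (cases b) simp_all

lemma continuous_on_coord_line: "continuous_on UNIV (coord_line b x)"
  unfolding coord_line_def by (cases b) (simp_all add: continuous_on_Pair)

lemma pd_dir_eq_deriv: "pd_dir b f x = deriv (\<lambda>a. f (coord_line b x a)) (coord b x)"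
  by (cases x) (simp add: pd_s_def pd_t_def coord_line_def coord_def)

lemma has_real_derivative_pd_dir:
  assumes "f differentiable (at x)"
  shows "((\<lambda>a. f (coord_line b x a)) has_real_derivative pd_dir b f x) (at (coord b x))"
proof -
  have "(\<lambda>a. f (coord_line b x a)) differentiable (at (coord b x))"
    using differentiable_chain_at[OF differentiable_coord_line, of f] assms by (simp add: o_def)
  then show ?thesis
    unfolding pd_dir_eq_deriv by (simp add: DERIV_deriv_iff_real_differentiable)
qed

lemma pd_dir_cong_open:
  assumes "open U" "x \<in> U" "\<And>y. y \<in> U \<Longrightarrow> f y = g y"
  shows "pd_dir b f x = pd_dir b g x"
proof -
  have "open (coord_line b x -` U)"
    using open_vimage[OF assms(1) continuous_on_coord_line] by simp
  moreover have "coord b x \<in> coord_line b x -` U"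
    using assms(2) by simp
  ultimately have "eventually (\<lambda>a. coord_line b x a \<in> U) (nhds (coord b x))"
    using eventually_nhds by blast
  then have "eventually (\<lambda>a. f (coord_line b x a) = g (coord_line b x a)) (nhds (coord b x))"
    by eventually_elim (simp add: assms(3))
  then show ?thesis
    unfolding pd_dir_eq_deriv by (rule deriv_cong_ev) simp
qed

lemma pd_dir_sum_mult:
  assumes "finite S" "\<And>c. c \<in> S \<Longrightarrow> f c differentiable (at x)"
    "\<And>c. c \<in> S \<Longrightarrow> g c differentiable (at x)"
  shows "pd_dir b (\<lambda>y. \<Sum>c\<in>S. f c y * g c y) x
    = (\<Sum>c\<in>S. pd_dir b (f c) x * g c x + f c x * pd_dir b (g c) x)"
proof -
  have "((\<lambda>a. \<Sum>c\<in>S. f c (coord_line b x a) * g c (coord_line b x a)) has_real_derivative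
      (\<Sum>c\<in>S. pd_dir b (f c) x * g c x + f c x * pd_dir b (g c) x)) (at (coord b x))"
  proof (rule DERIV_sum)
    fix c assume "c \<in> S"
    from DERIV_mult[OF has_real_derivative_pd_dir has_real_derivative_pd_dir, OF assms(2,3)[OF this]]
    show "((\<lambda>a. f c (coord_line b x a) * g c (coord_line b x a)) has_real_derivative
        pd_dir b (f c) x * g c x + f c x * pd_dir b (g c) x) (at (coord b x))"
      by (simp add: algebra_simps)
  qed
  then show ?thesis
    unfolding pd_dir_eq_deriv[of b _ x] by (rule DERIV_imp_deriv)
qed

section \<open>The Leibniz rule\<close>

fun masked :: "'a list \<Rightarrow> bool list \<Rightarrow> 'a list" where
  "masked (b # bs) (c # cs) = (if c then b # masked bs cs else masked bs cs)"
| "masked _ _ = []"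

lemma sum_bool_lists_Suc:
  "(\<Sum>cs | length cs = Suc n. F cs)
    = (\<Sum>cs | length cs = n. F (True # cs)) + (\<Sum>cs | length cs = n. F (False # cs))"
proof -
  let ?L = "{cs::bool list. length cs = n}"
  have "finite ?L"
    using finite_lists_length_eq[of "UNIV :: bool set" n] by simp
  moreover have "{cs. length cs = Suc n} = Cons True ` ?L \<union> Cons False ` ?L"
    by (auto simp: length_Suc_conv)
  moreover have "Cons True ` ?L \<inter> Cons False ` ?L = {}"
    by auto
  ultimately have "(\<Sum>cs | length cs = Suc n. F cs) = sum F (Cons True ` ?L) + sum F (Cons False ` ?L)"
    by (simp add: sum.union_disjoint)
  then show ?thesis
    by (simp add: sum.reindex)
qed

lemma smooth_on_subset: "smooth_on U f \<Longrightarrow> V \<subseteq> U \<Longrightarrow> smooth_on V f"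
  unfolding smooth_on_def by (auto intro: differentiable_on_subset)

lemma smooth_on_differentiable:
  "smooth_on U f \<Longrightarrow> open U \<Longrightarrow> x \<in> U \<Longrightarrow> pd_list bs f differentiable (at x)"
  unfolding smooth_on_def differentiable_on_def by (metis at_within_open)

lemma pd_list_mult:
  assumes U: "open U" and f: "smooth_on U f" and g: "smooth_on U g" and "x \<in> U"
  shows "pd_list bs (\<lambda>y. f y * g y) x =
    (\<Sum>cs | length cs = length bs. pd_list (masked bs cs) f x * pd_list (masked bs (map Not cs)) g x)"
  using \<open>x \<in> U\<close>
proof (induction bs arbitrary: x)
  case Nil
  have "{cs::bool list. length cs = 0} = {[]}" by auto
  then show ?case by simp
next
  case (Cons b bs)
  let ?f = "\<lambda>cs. pd_list (masked bs cs) f" and ?g = "\<lambda>cs. pd_list (masked bs (map Not cs)) g"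
  have fin: "finite {cs::bool list. length cs = length bs}"
    using finite_lists_length_eq[of "UNIV :: bool set"] by simp
  have "pd_list (b # bs) (\<lambda>y. f y * g y) x
      = pd_dir b (\<lambda>y. \<Sum>cs | length cs = length bs. ?f cs y * ?g cs y) x"
    using pd_dir_cong_open[OF U Cons.prems Cons.IH] by simp
  also have "\<dots> = (\<Sum>cs | length cs = length bs. pd_dir b (?f cs) x * ?g cs x)
      + (\<Sum>cs | length cs = length bs. ?f cs x * pd_dir b (?g cs) x)"
    using Cons.prems
    by (simp add: pd_dir_sum_mult[OF fin] smooth_on_differentiable[OF f U]
        smooth_on_differentiable[OF g U] sum.distrib del: pd_list.simps)
  also have "\<dots> = (\<Sum>cs | length cs = length (b # bs).
      pd_list (masked (b # bs) cs) f x * pd_list (masked (b # bs) (map Not cs)) g x)"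
    by (simp only: length_Cons sum_bool_lists_Suc masked.simps list.map pd_list.simps
        if_True if_False not_True_eq_False not_False_eq_True)
  finally show ?case .
qed

lemma pd_list_append: "pd_list (xs @ ys) f = pd_list xs (pd_list ys f)"
  by (induction xs) auto

lemma pd_list_replicate: "pd_list (replicate \<nu> True @ replicate \<mu> False) f = pd \<nu> \<mu> f"
proof -
  have "pd_list (replicate \<mu> False) f = (pd_t ^^ \<mu>) f"
    by (induction \<mu>) auto
  then show ?thesis
    unfolding pd_def by (induction \<nu>) auto
qed

lemma pd_pd_t: "pd \<nu> \<mu> (pd_t u) = pd \<nu> (Suc \<mu>) u"
  unfolding pd_def by (simp add: funpow_swap1)

lemma smooth_on_pd_t:
  assumes "smooth_on U u"
  shows "smooth_on U (pd_t u)"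
proof -
  have "pd_list bs (pd_t u) = pd_list (bs @ [False]) u" for bs
    by (simp add: pd_list_append)
  then show ?thesis
    using assms unfolding smooth_on_def by simp
qed

lemma masked_append:
  "masked (xs @ ys) cs = masked xs (take (length xs) cs) @ masked ys (drop (length xs) cs)"
proof (induction xs arbitrary: cs)
  case (Cons a xs)
  then show ?case by (cases cs) auto
qed simp

lemma masked_replicate: "masked (replicate n b) cs = replicate (length (filter id (take n cs))) b"
proof (induction n arbitrary: cs)
  case (Suc n)
  then show ?case by (cases cs) auto
qed simp

lemma masked_parabolic:
  assumes "length cs = \<nu> + \<mu>"
  obtains j i where "j \<le> \<nu>" "i \<le> \<mu>"
    "masked (replicate \<nu> True @ replicate \<mu> False) cs = replicate j True @ replicate i False"
    "masked (replicate \<nu> True @ replicate \<mu> False) (map Not cs)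
      = replicate (\<nu> - j) True @ replicate (\<mu> - i) False"
proof
  let ?j = "length (filter id (take \<nu> cs))" and ?i = "length (filter id (take \<mu> (drop \<nu> cs)))"
  have len: "length (take \<nu> cs) = \<nu>" "length (take \<mu> (drop \<nu> cs)) = \<mu>"
    using assms by auto
  show "?j \<le> \<nu>"
    using length_filter_le[of id "take \<nu> cs"] len(1) by simp
  show "?i \<le> \<mu>"
    using length_filter_le[of id "take \<mu> (drop \<nu> cs)"] len(2) by simp
  show "masked (replicate \<nu> True @ replicate \<mu> False) cs = replicate ?j True @ replicate ?i False"
    by (simp add: masked_append masked_replicate)
  have "length (filter Not xs) = length xs - length (filter id xs)" for xs :: "bool list"
    using sum_length_filter_compl[of id xs] by (simp add: comp_def)
  then show "masked (replicate \<nu> True @ replicate \<mu> False) (map Not cs)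
      = replicate (\<nu> - ?j) True @ replicate (\<mu> - ?i) False"
    by (simp add: masked_append masked_replicate take_map drop_map len assms)
qed

lemma powr_add_le:
  fixes a b p :: real
  assumes "a \<ge> 0" "b \<ge> 0" "p \<ge> 0"
  shows "(a + b) powr p \<le> 2 powr p * (a powr p + b powr p)"
proof -
  have "(a + b) powr p \<le> (2 * max a b) powr p"
    by (rule powr_mono2) (use assms in auto)
  also have "\<dots> = 2 powr p * max a b powr p"
    using assms by (simp add: powr_mult)
  also have "\<dots> \<le> 2 powr p * (a powr p + b powr p)"
    by (intro mult_left_mono) (auto simp: max_def)
  finally show ?thesis .
qed

lemma powr_sum_le:
  fixes y :: "'a \<Rightarrow> real" and p :: real
  assumes "p \<ge> 0" "finite F" "\<And>i. i \<in> F \<Longrightarrow> y i \<ge> 0"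
  shows "(\<Sum>i\<in>F. y i) powr p \<le> (2 powr p) ^ card F * (\<Sum>i\<in>F. y i powr p)"
  using assms(2,3)
proof (induction F rule: finite_induct)
  case empty
  then show ?case by simp
next
  case (insert a F)
  have two: "(2::real) powr p \<ge> 1" "(2 powr p) ^ card F \<ge> 1"
    using assms(1) by (simp_all add: ge_one_powr_ge_zero)
  have "(\<Sum>i\<in>insert a F. y i) powr p \<le> 2 powr p * (y a powr p + (\<Sum>i\<in>F. y i) powr p)"
    using insert by (simp add: powr_add_le sum_nonneg assms(1))
  also have "\<dots> \<le> 2 powr p * ((2 powr p) ^ card F * y a powr p
      + (2 powr p) ^ card F * (\<Sum>i\<in>F. y i powr p))"
    using insert two by (intro mult_left_mono add_mono) (auto simp: mult_le_cancel_right1)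
  also have "\<dots> = (2 powr p) ^ card (insert a F) * (\<Sum>i\<in>insert a F. y i powr p)"
    using insert by (simp add: algebra_simps)
  finally show ?case .
qed

lemma powr_add_powr_le:
  fixes X Y p :: real
  assumes "X \<ge> 0" "Y \<ge> 0" "p \<ge> 0"
  shows "X powr p + Y powr p \<le> 2 * (X + Y) powr p"
  using powr_mono2[OF assms(3) assms(1), of "X + Y"] powr_mono2[OF assms(3) assms(2), of "X + Y"]
    assms by simp

section \<open>The pointwise estimate\<close>

lemma abs_leibniz_term_le:
  assumes len: "length cs = \<nu> + \<mu>" and order: "2*\<nu> + \<mu> \<le> 2*k"
    and V: "\<bar>v x\<bar> \<le> V" and C: "C \<ge> 0" "\<And>a b. 2*a + b < 2*k \<Longrightarrow> \<bar>pd a b w x\<bar> \<le> C"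
  defines "bs \<equiv> replicate \<nu> True @ replicate \<mu> False"
  shows "\<bar>pd_list (masked bs cs) w x * pd_list (masked bs (map Not cs)) v x\<bar>
    \<le> \<bar>pd \<nu> \<mu> w x\<bar> * V + C * (\<Sum>(a, b)\<in>parabolic_orders k. \<bar>pd a b v x\<bar>)"
proof -
  define S where "S = (\<Sum>(a, b)\<in>parabolic_orders k. \<bar>pd a b v x\<bar>)"
  have "V \<ge> 0" "S \<ge> 0"
    using V by (auto simp: S_def intro!: sum_nonneg)
  obtain j i where ji: "j \<le> \<nu>" "i \<le> \<mu>"
    and "masked bs cs = replicate j True @ replicate i False"
      "masked bs (map Not cs) = replicate (\<nu> - j) True @ replicate (\<mu> - i) False"
    using masked_parabolic[OF len] unfolding bs_def by blast
  then have split: "pd_list (masked bs cs) w x * pd_list (masked bs (map Not cs)) v x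
      = pd j i w x * pd (\<nu> - j) (\<mu> - i) v x"
    by (simp add: pd_list_replicate)
  show ?thesis
  proof (cases "j = \<nu> \<and> i = \<mu>")
    case True
    then have "\<bar>pd j i w x * pd (\<nu> - j) (\<mu> - i) v x\<bar> \<le> \<bar>pd \<nu> \<mu> w x\<bar> * V"
      using V by (simp add: pd_def abs_mult mult_left_mono)
    then show ?thesis
      using C \<open>S \<ge> 0\<close> by (simp add: split S_def[symmetric] add_increasing2)
  next
    case False
    then have "\<bar>pd j i w x\<bar> \<le> C"
      using ji order by (intro C(2)) auto
    moreover have "\<bar>pd (\<nu> - j) (\<mu> - i) v x\<bar> \<le> S"
      unfolding S_def using order finite_parabolic_orders
        member_le_sum[of "(\<nu> - j, \<mu> - i)" "parabolic_orders k" "\<lambda>(a, b). \<bar>pd a b v x\<bar>"]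
      by auto
    ultimately have "\<bar>pd j i w x * pd (\<nu> - j) (\<mu> - i) v x\<bar> \<le> C * S"
      unfolding abs_mult by (intro mult_mono) auto
    then show ?thesis
      using \<open>V \<ge> 0\<close> by (simp add: split S_def[symmetric] add_increasing)
  qed
qed

lemma abs_pd_mult_le:
  assumes U: "open U" "x \<in> U" and w: "smooth_on U w" and v: "smooth_on U v"
    and V: "\<bar>v x\<bar> \<le> V" and C: "C \<ge> 0" "\<And>a b. 2*a + b < 2*k \<Longrightarrow> \<bar>pd a b w x\<bar> \<le> C"
    and order: "2*\<nu> + \<mu> \<le> 2*k"
  shows "\<bar>pd \<nu> \<mu> (\<lambda>y. w y * v y) x\<bar>
    \<le> 2^(2*k) * (\<bar>pd \<nu> \<mu> w x\<bar> * V + C * (\<Sum>(a, b)\<in>parabolic_orders k. \<bar>pd a b v x\<bar>))"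
proof -
  define bs where "bs = replicate \<nu> True @ replicate \<mu> False"
  define B where "B = \<bar>pd \<nu> \<mu> w x\<bar> * V + C * (\<Sum>(a, b)\<in>parabolic_orders k. \<bar>pd a b v x\<bar>)"
  have B0: "B \<ge> 0"
    using V C unfolding B_def by (intro add_nonneg_nonneg mult_nonneg_nonneg sum_nonneg) auto
  have "\<bar>pd \<nu> \<mu> (\<lambda>y. w y * v y) x\<bar> = \<bar>\<Sum>cs | length cs = \<nu> + \<mu>.
      pd_list (masked bs cs) w x * pd_list (masked bs (map Not cs)) v x\<bar>"
    using pd_list_mult[OF U(1) w v U(2), of bs] by (simp add: bs_def pd_list_replicate)
  also have "\<dots> \<le> (\<Sum>cs | length cs = \<nu> + \<mu>.
      \<bar>pd_list (masked bs cs) w x * pd_list (masked bs (map Not cs)) v x\<bar>)"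
    by (rule sum_abs)
  also have "\<dots> \<le> (\<Sum>cs | length (cs :: bool list) = \<nu> + \<mu>. B)"
    unfolding B_def bs_def using abs_leibniz_term_le[of _ \<nu> \<mu> k v x, OF _ order V C]
    by (intro sum_mono) simp
  also have "\<dots> = 2 ^ (\<nu> + \<mu>) * B"
    using card_lists_length_eq[of "UNIV :: bool set"] by simp
  also have "\<dots> \<le> 2 ^ (2*k) * B"
    using B0 order by (intro mult_right_mono power_increasing) auto
  finally show ?thesis
    unfolding B_def .
qed

text \<open>The constant collects the at most \<open>2^(2k)\<close> Leibniz terms, the bound
  \<open>(a + b)^p \<le> 2^p (a^p + b^p)\<close> and its iteration over the parabolic multi-indices.\<close>

definition leibniz_constant :: "nat \<Rightarrow> real \<Rightarrow> real" where
  "leibniz_constant k p = (2^(2*k)) powr p * 2 powr p * card (parabolic_orders k)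
     * (2 powr p) ^ card (parabolic_orders k)"

lemma powr_abs_pd_mult_le:
  assumes "p \<ge> 0" "open U" "x \<in> U" "smooth_on U w" "smooth_on U v"
    and V: "\<bar>v x\<bar> \<le> V" and C: "C \<ge> 0" "\<And>a b. 2*a + b < 2*k \<Longrightarrow> \<bar>pd a b w x\<bar> \<le> C"
    and "2*\<nu> + \<mu> \<le> 2*k"
  shows "\<bar>pd \<nu> \<mu> (\<lambda>y. w y * v y) x\<bar> powr p \<le> (2^(2*k)) powr p * 2 powr p
    * (V powr p * \<bar>pd \<nu> \<mu> w x\<bar> powr p
       + C powr p * ((2 powr p) ^ card (parabolic_orders k) * W_integrand k p v x))"
proof -
  define A where "A = \<bar>pd \<nu> \<mu> w x\<bar> * V"
  define S where "S = (\<Sum>(a, b)\<in>parabolic_orders k. \<bar>pd a b v x\<bar>)"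
  have A0: "A \<ge> 0" and S0: "S \<ge> 0"
    using V by (auto simp: A_def S_def intro!: sum_nonneg)
  have S_powr: "S powr p \<le> (2 powr p) ^ card (parabolic_orders k) * W_integrand k p v x"
    using powr_sum_le[OF \<open>p \<ge> 0\<close> finite_parabolic_orders, where y = "\<lambda>(a, b). \<bar>pd a b v x\<bar>"]
    unfolding S_def by (simp add: case_prod_beta')
  have "\<bar>pd \<nu> \<mu> (\<lambda>y. w y * v y) x\<bar> powr p \<le> (2^(2*k) * (A + C * S)) powr p"
    using abs_pd_mult_le[OF assms(2-5) V C assms(9)] \<open>p \<ge> 0\<close>
    by (intro powr_mono2) (auto simp: A_def S_def)
  also have "\<dots> = (2^(2*k)) powr p * (A + C * S) powr p"
    using A0 S0 C by (simp add: powr_mult)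
  also have "\<dots> \<le> (2^(2*k)) powr p * (2 powr p * (A powr p + C powr p * S powr p))"
    using powr_add_le[of A "C * S" p] A0 S0 C \<open>p \<ge> 0\<close>
    by (intro mult_left_mono) (auto simp: powr_mult)
  also have "\<dots> \<le> (2^(2*k)) powr p * (2 powr p * (A powr p
      + C powr p * ((2 powr p) ^ card (parabolic_orders k) * W_integrand k p v x)))"
    using S_powr by (intro mult_left_mono add_left_mono) auto
  finally show ?thesis
    using V by (simp add: A_def powr_mult mult.commute mult.left_commute mult.assoc)
qed

lemma W_integrand_mult_le:
  assumes "p \<ge> 0" "open U" "x \<in> U" "smooth_on U w" "smooth_on U v"
    and "\<bar>v x\<bar> \<le> V" "C \<ge> 0" "\<And>a b. 2*a + b < 2*k \<Longrightarrow> \<bar>pd a b w x\<bar> \<le> C"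
  shows "W_integrand k p (\<lambda>y. w y * v y) x
    \<le> leibniz_constant k p * (V powr p * W_integrand k p w x + C powr p * W_integrand k p v x)"
proof -
  define N where "N = card (parabolic_orders k)"
  define L where "L = (2^(2*k)) powr p * 2 powr (p::real)"
  define Q where "Q = (2 powr p) ^ N"
  define Fw where "Fw = W_integrand k p w x"
  define Fv where "Fv = W_integrand k p v x"
  have "(0, 0) \<in> parabolic_orders k"
    by simp
  then have "card (parabolic_orders k) > 0"
    using finite_parabolic_orders[of k] card_gt_0_iff by blast
  then have N1: "real N \<ge> 1"
    by (simp add: N_def)
  have Q1: "Q \<ge> 1"
    using \<open>p \<ge> 0\<close> by (simp add: Q_def ge_one_powr_ge_zero)
  have X0: "V powr p * Fw \<ge> 0" and Y0: "C powr p * Fv \<ge> 0"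
    by (auto simp: Fw_def Fv_def intro!: mult_nonneg_nonneg sum_nonneg)
  have "\<bar>pd \<nu> \<mu> (\<lambda>y. w y * v y) x\<bar> powr p
      \<le> L * (V powr p * \<bar>pd \<nu> \<mu> w x\<bar> powr p + C powr p * (Q * Fv))"
    if "2*\<nu> + \<mu> \<le> 2*k" for \<nu> \<mu>
    unfolding L_def Q_def N_def Fv_def by (rule powr_abs_pd_mult_le[OF assms that])
  then have "W_integrand k p (\<lambda>y. w y * v y) x \<le> (\<Sum>(\<nu>, \<mu>)\<in>parabolic_orders k.
      L * (V powr p * \<bar>pd \<nu> \<mu> w x\<bar> powr p + C powr p * (Q * Fv)))"
    by (intro sum_mono) auto
  also have "\<dots> = L * (V powr p * Fw + N * (C powr p * (Q * Fv)))"
    unfolding Fw_def N_def by (simp add: sum_distrib_left[symmetric] sum.distrib case_prod_unfold)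
  also have "\<dots> \<le> L * (N * Q * (V powr p * Fw + C powr p * Fv))"
  proof -
    have "V powr p * Fw \<le> N * Q * (V powr p * Fw)"
      using mult_right_mono[OF mult_mono[OF N1 Q1] X0] by simp
    then show ?thesis
      by (intro mult_left_mono) (auto simp: L_def algebra_simps)
  qed
  finally show ?thesis
    by (simp add: leibniz_constant_def L_def Q_def N_def Fw_def Fv_def mult.assoc)
qed

section \<open>Integration\<close>

lemma set_integral_root_le:
  fixes F f g :: "'a \<Rightarrow> real"
  assumes p: "p > 0" and K: "K \<ge> 0" and \<alpha>: "\<alpha> \<ge> 0" and \<beta>: "\<beta> \<ge> 0"
    and f: "set_integrable M \<Omega> f" and g: "set_integrable M \<Omega> g"
    and nonneg: "\<And>x. x \<in> \<Omega> \<Longrightarrow> 0 \<le> F x \<and> 0 \<le> f x \<and> 0 \<le> g x"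
    and le: "\<And>x. x \<in> \<Omega> \<Longrightarrow> F x \<le> K * (\<alpha> powr p * f x + \<beta> powr p * g x)"
  shows "(LINT x:\<Omega>|M. F x) powr (1/p)
    \<le> (2 * K) powr (1/p) * (\<alpha> * (LINT x:\<Omega>|M. f x) powr (1/p) + \<beta> * (LINT x:\<Omega>|M. g x) powr (1/p))"
proof -
  have set_integral_nonneg: "(LINT x:\<Omega>|M. h x) \<ge> 0"
    if "\<And>x. x \<in> \<Omega> \<Longrightarrow> h x \<ge> 0" for h :: "'a \<Rightarrow> real"
    unfolding set_lebesgue_integral_def
    by (rule Bochner_Integration.integral_nonneg) (simp add: that indicator_def)
  define X where "X = \<alpha> * (LINT x:\<Omega>|M. f x) powr (1/p)"
  define Y where "Y = \<beta> * (LINT x:\<Omega>|M. g x) powr (1/p)"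
  have X0: "X \<ge> 0" and Y0: "Y \<ge> 0"
    using \<alpha> \<beta> by (simp_all add: X_def Y_def)
  have X_powr: "X powr p = \<alpha> powr p * (LINT x:\<Omega>|M. f x)"
    using \<alpha> p set_integral_nonneg[of f] nonneg by (simp add: X_def powr_mult powr_powr)
  have Y_powr: "Y powr p = \<beta> powr p * (LINT x:\<Omega>|M. g x)"
    using \<beta> p set_integral_nonneg[of g] nonneg by (simp add: Y_def powr_mult powr_powr)
  have int_G: "set_integrable M \<Omega> (\<lambda>x. K * (\<alpha> powr p * f x + \<beta> powr p * g x))"
    using f g by (intro set_integrable_mult_right set_integral_add set_integrable_mult_right)
  have "(LINT x:\<Omega>|M. F x) \<le> (LINT x:\<Omega>|M. K * (\<alpha> powr p * f x + \<beta> powr p * g x))"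
    unfolding set_lebesgue_integral_def
    using int_G nonneg le K unfolding set_integrable_def
    by (intro integral_mono') (auto simp: indicator_def)
  also have "\<dots> = K * (X powr p + Y powr p)"
    using f g by (simp add: X_powr Y_powr)
  also have "\<dots> \<le> K * (2 * (X + Y) powr p)"
    using powr_add_powr_le[OF X0 Y0] K p by (simp add: mult_left_mono)
  finally have "(LINT x:\<Omega>|M. F x) powr (1/p) \<le> (K * (2 * (X + Y) powr p)) powr (1/p)"
    using p nonneg by (intro powr_mono2 set_integral_nonneg) auto
  also have "\<dots> = (2 * K) powr (1/p) * (X + Y)"
    using K X0 Y0 p by (simp add: powr_mult powr_powr)
  finally show ?thesis
    unfolding X_def Y_def .
qed

lemma continuous_on_pd: "smooth_on U f \<Longrightarrow> continuous_on U (pd \<nu> \<mu> f)"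
  unfolding smooth_on_def by (metis pd_list_replicate differentiable_imp_continuous_on)

lemma set_integrable_W_integrand:
  assumes "p > 0" "bounded \<Omega>" "open \<Omega>" "closure \<Omega> \<subseteq> U" "smooth_on U w"
  shows "set_integrable lborel \<Omega> (W_integrand k p w)"
proof -
  have "continuous_on (closure \<Omega>) (W_integrand k p w)"
    using continuous_on_subset[OF continuous_on_pd[OF assms(5)] assms(4)] assms(1)
    unfolding split_def
    by (intro continuous_on_sum continuous_on_powr' continuous_on_rabs continuous_on_const) auto
  then have "set_integrable lborel (closure \<Omega>) (W_integrand k p w)"
    unfolding set_integrable_def
    using assms(2) by (intro borel_integrable_compact) auto
  then show ?thesis
    by (rule set_integrable_subset) (use assms(3) closure_subset in auto)
qed

lemma abs_le_sup_norm:
  assumes "bounded \<Omega>" "continuous_on (closure \<Omega>) g" "x \<in> \<Omega>"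
  shows "\<bar>g x\<bar> \<le> sup_norm \<Omega> g"
proof -
  have "bounded (g ` closure \<Omega>)"
    using assms(1,2) by (intro compact_imp_bounded compact_continuous_image) auto
  then obtain B where "\<forall>y\<in>closure \<Omega>. \<bar>g y\<bar> \<le> B"
    unfolding bounded_iff by auto
  then have "bdd_above ((\<lambda>y. \<bar>g y\<bar>) ` \<Omega>)"
    using closure_subset by (intro bdd_aboveI2) blast
  then show ?thesis
    unfolding sup_norm_def using assms(3) by (rule cSUP_upper2) simp
qed

lemma abs_pd_le_C_norm:
  assumes "bounded \<Omega>" "closure \<Omega> \<subseteq> U" "smooth_on U u" "x \<in> \<Omega>"
    and "(\<nu>, \<mu>) \<in> parabolic_orders k"
  shows "\<bar>pd \<nu> \<mu> u x\<bar> \<le> C_norm k \<Omega> u"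
proof -
  have sup_ge: "\<bar>pd a b u x\<bar> \<le> sup_norm \<Omega> (pd a b u)" for a b
    using continuous_on_subset[OF continuous_on_pd[OF assms(3)] assms(2)]
    by (rule abs_le_sup_norm[OF assms(1) _ assms(4)])
  have "sup_norm \<Omega> (pd \<nu> \<mu> u) \<le> C_norm k \<Omega> u"
    unfolding C_norm_def
    using member_le_sum[of "(\<nu>, \<mu>)" "parabolic_orders k" "\<lambda>(a, b). sup_norm \<Omega> (pd a b u)"]
      assms(5) finite_parabolic_orders order_trans[OF abs_ge_zero sup_ge] by auto
  then show ?thesis
    using sup_ge order_trans by blast
qed

lemma W_norm_pd_t_mult_le:
  assumes p: "p > 0" and \<Omega>: "open \<Omega>" "bounded \<Omega>"
    and u: "smooth_closure \<Omega> u" and v: "smooth_closure \<Omega> v"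
  shows "W_norm k p \<Omega> (\<lambda>x. pd_t u x * v x) \<le> (2 * leibniz_constant k p) powr (1/p)
    * (W_norm k p \<Omega> (pd_t u) * sup_norm \<Omega> v + C_norm k \<Omega> u * W_norm k p \<Omega> v)"
proof (cases "\<Omega> = {}")
  case True
  then show ?thesis
    by (simp add: W_norm_def set_lebesgue_integral_def)
next
  case False
  then obtain x0 where x0: "x0 \<in> \<Omega>" by blast
  obtain U where U: "open U" "closure \<Omega> \<subseteq> U" and su: "smooth_on U u" and sv: "smooth_on U v"
    using u v unfolding smooth_closure_def
    by (metis Int_subset_iff open_Int inf_le1 inf_le2 smooth_on_subset)
  have sv0: "\<bar>v x\<bar> \<le> sup_norm \<Omega> v" if "x \<in> \<Omega>" for x
    using abs_le_sup_norm[OF \<Omega>(2) continuous_on_subset[OF continuous_on_pd[OF sv] U(2)] that, of 0 0]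
    by (simp add: pd_def)
  have Cu: "\<bar>pd a b (pd_t u) x\<bar> \<le> C_norm k \<Omega> u" if "x \<in> \<Omega>" "2*a + b < 2*k" for a b x
    unfolding pd_pd_t using that by (intro abs_pd_le_C_norm[OF \<Omega>(2) U(2) su]) auto
  have C0: "C_norm k \<Omega> u \<ge> 0"
    using abs_pd_le_C_norm[OF \<Omega>(2) U(2) su x0, of 0 0 k] by simp
  have V0: "sup_norm \<Omega> v \<ge> 0"
    using sv0[OF x0] by linarith
  have \<Omega>U: "x \<in> U" if "x \<in> \<Omega>" for x
    using U(2) closure_subset that by blast
  have "W_integrand k p (\<lambda>y. pd_t u y * v y) x \<le> leibniz_constant k p
      * (sup_norm \<Omega> v powr p * W_integrand k p (pd_t u) x + C_norm k \<Omega> u powr p * W_integrand k p v x)"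
    if "x \<in> \<Omega>" for x
    using p by (intro W_integrand_mult_le[OF _ U(1) \<Omega>U smooth_on_pd_t[OF su] sv sv0 C0 Cu] that) auto
  then have "(LINT x:\<Omega>|lborel. W_integrand k p (\<lambda>y. pd_t u y * v y) x) powr (1/p)
      \<le> (2 * leibniz_constant k p) powr (1/p)
        * (sup_norm \<Omega> v * (LINT x:\<Omega>|lborel. W_integrand k p (pd_t u) x) powr (1/p)
           + C_norm k \<Omega> u * (LINT x:\<Omega>|lborel. W_integrand k p v x) powr (1/p))"
    using set_integrable_W_integrand[OF p \<Omega>(2,1) U(2)] su sv
    by (intro set_integral_root_le[OF p _ V0 C0]) (auto simp: leibniz_constant_def smooth_on_pd_t
        intro!: sum_nonneg)
  then show ?thesis
    by (simp add: W_norm_def mult.commute)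
qed

theorem mainTheorem9:
  fixes p :: real
  assumes "p > 2"
  shows "\<forall>k::nat. k \<ge> 1 \<longrightarrow> (\<forall>A::real. \<exists>c::real.
           \<forall>\<Omega> :: (real \<times> real) set. open \<Omega> \<and> bounded \<Omega> \<and> measure lborel \<Omega> = A \<longrightarrow>
             (\<forall>u v. smooth_closure \<Omega> u \<and> smooth_closure \<Omega> v \<longrightarrow>
                W_norm k p \<Omega> (\<lambda>x. pd_t u x * v x)
                  \<le> c * (W_norm k p \<Omega> (pd_t u) * sup_norm \<Omega> v + C_norm k \<Omega> u * W_norm k p \<Omega> v)))"
proof -
  \<comment> \<open>only \<open>p > 0\<close> is needed; \<open>k \<ge> 1\<close> and the area of \<open>\<Omega>\<close> do not enter the constant\<close>
  have "p > 0"
    using assms by simp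
  from W_norm_pd_t_mult_le[OF this] show ?thesis
    by blast
qed

end
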